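(* Both $S_A$ and $S_B$ are nonempty.
   Context: All graphs are finite and simple. A graph $G$ is a minimal prime graph complement if $G$ has at least $2$ vertices and: (1) the complement $\overline{G}$ is connected; (2) $G$ is triangle-free; (3) $G$ is $3$-colorable; (4) for any two distinct nonadjacent vertices $u,v$ of $G$, adding the edge $uv$ to $G$ yields a graph that either contains a triangle or is not $3$-colorable. Standing setup: $\Gamma$ is a minimal prime graph complement with a vertex $X$ of degree $2$, whose two neighbors are $A$ and $B$. Among the vertices of $\Gamma$ other than $X,A,B$: $S_A$ is the set of those adjacent to $A$ but not $B$; $S_B$ the set of those adjacent to $B$ but not $A$; $S_Y$ the set of those adjacent to both $A$ and $B$; $S_Z$ the set of those adjacent to neither $A$ nor $B$. *)

theory Defs
  imports Main
begin

definition simple_graph :: "'a set \<Rightarrow> ('a \<Rightarrow> 'a \<Rightarrow> bool) \<Rightarrow> bool" where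
  "simple_graph V E \<longleftrightarrow> finite V \<and> (\<forall>u v. E u v \<longrightarrow> u \<in> V \<and> v \<in> V)
     \<and> (\<forall>u v. E u v \<longrightarrow> E v u) \<and> (\<forall>u. \<not> E u u)"

definition compl_adj :: "'a set \<Rightarrow> ('a \<Rightarrow> 'a \<Rightarrow> bool) \<Rightarrow> 'a \<Rightarrow> 'a \<Rightarrow> bool" where
  "compl_adj V E u v \<longleftrightarrow> u \<in> V \<and> v \<in> V \<and> u \<noteq> v \<and> \<not> E u v"

definition connected_graph :: "'a set \<Rightarrow> ('a \<Rightarrow> 'a \<Rightarrow> bool) \<Rightarrow> bool" where
  "connected_graph V E \<longleftrightarrow> (\<forall>u\<in>V. \<forall>v\<in>V. (E\<^sup>*\<^sup>*) u v)"

definition triangle_free :: "'a set \<Rightarrow> ('a \<Rightarrow> 'a \<Rightarrow> bool) \<Rightarrow> bool" where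
  "triangle_free V E \<longleftrightarrow> \<not> (\<exists>x\<in>V. \<exists>y\<in>V. \<exists>z\<in>V. E x y \<and> E y z \<and> E x z)"

definition three_colorable :: "'a set \<Rightarrow> ('a \<Rightarrow> 'a \<Rightarrow> bool) \<Rightarrow> bool" where
  "three_colorable V E \<longleftrightarrow>
     (\<exists>c :: 'a \<Rightarrow> nat. (\<forall>v\<in>V. c v < 3) \<and> (\<forall>u\<in>V. \<forall>v\<in>V. E u v \<longrightarrow> c u \<noteq> c v))"

definition add_edge :: "('a \<Rightarrow> 'a \<Rightarrow> bool) \<Rightarrow> 'a \<Rightarrow> 'a \<Rightarrow> 'a \<Rightarrow> 'a \<Rightarrow> bool" where
  "add_edge E u v = (\<lambda>x y. E x y \<or> (x = u \<and> y = v) \<or> (x = v \<and> y = u))"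

definition minimal_prime_graph_complement :: "'a set \<Rightarrow> ('a \<Rightarrow> 'a \<Rightarrow> bool) \<Rightarrow> bool" where
  "minimal_prime_graph_complement V E \<longleftrightarrow>
     simple_graph V E \<and> card V \<ge> 2 \<and>
     connected_graph V (compl_adj V E) \<and>
     triangle_free V E \<and> three_colorable V E \<and>
     (\<forall>u\<in>V. \<forall>v\<in>V. u \<noteq> v \<and> \<not> E u v \<longrightarrow>
        \<not> triangle_free V (add_edge E u v) \<or> \<not> three_colorable V (add_edge E u v))"

definition nbhd :: "'a set \<Rightarrow> ('a \<Rightarrow> 'a \<Rightarrow> bool) \<Rightarrow> 'a \<Rightarrow> 'a set" where
  "nbhd V E x = {y \<in> V. E x y}"

end

theory Submission
  imports Defs
begin

text \<open>Suppose every neighbour of A were also a neighbour of B. Then A can be recoloured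
with the colour of B, so that X sees a single colour. Every vertex v outside {A, B}
must then be adjacent to B: otherwise X and v have no common neighbour, and recolouring
X to avoid v shows that the edge Xv could be added, against minimality. Hence
V - {A, B} is independent, and the same minimality argument, now with the 2-colouring
that separates {A, B} from the rest, makes every such vertex adjacent to A as well.
But then {A, B} is a union of components of the complement missing X.\<close>

lemma simple_graphD:
  assumes "simple_graph V E"
  shows "E u v \<Longrightarrow> u \<in> V" "E u v \<Longrightarrow> v \<in> V" "E u v \<Longrightarrow> E v u" "\<not> E u u"
  using assms unfolding simple_graph_def by blast+

definition is_3_coloring :: "'a set \<Rightarrow> ('a \<Rightarrow> 'a \<Rightarrow> bool) \<Rightarrow> ('a \<Rightarrow> nat) \<Rightarrow> bool" where
  "is_3_coloring V E c \<longleftrightarrow> (\<forall>v\<in>V. c v < 3) \<and> (\<forall>u\<in>V. \<forall>v\<in>V. E u v \<longrightarrow> c u \<noteq> c v)"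

lemma three_colorable_iff_is_3_coloring:
  "three_colorable V E \<longleftrightarrow> (\<exists>c. is_3_coloring V E c)"
  unfolding three_colorable_def is_3_coloring_def ..

lemma add_edge_iff: "add_edge E u v x y \<longleftrightarrow> E x y \<or> (x = u \<and> y = v) \<or> (x = v \<and> y = u)"
  unfolding add_edge_def ..

lemma triangle_free_add_edge:
  assumes "simple_graph V E" "triangle_free V E" "u \<noteq> v"
    and "\<nexists>z. E u z \<and> E v z"
  shows "triangle_free V (add_edge E u v)"
  using assms simple_graphD[OF assms(1)] unfolding triangle_free_def add_edge_iff
  by blast

lemma is_3_coloring_recolour_dominated:
  assumes "simple_graph V E" "is_3_coloring V E c" "b \<in> V"
    and "\<forall>v. E v a \<longrightarrow> E v b"
  shows "is_3_coloring V E (c(a := c b))"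
  using assms simple_graphD[OF assms(1)] unfolding is_3_coloring_def by auto

lemma three_colorable_add_edge_recolour:
  assumes "simple_graph V E" "is_3_coloring V E c" "x \<noteq> v"
    and "\<forall>y. E x y \<longrightarrow> c y = k"
  shows "three_colorable V (add_edge E x v)"
proof -
  obtain i :: nat where i: "i < 3" "i \<noteq> k" "i \<noteq> c v"
    by (metis lessI numeral_3_eq_3 less_SucI nat_neq_iff)
  have "is_3_coloring V (add_edge E x v) (c(x := i))"
    using assms i simple_graphD[OF assms(1)] unfolding is_3_coloring_def add_edge_iff
    by auto
  then show ?thesis
    unfolding three_colorable_iff_is_3_coloring by blast
qed

lemma three_colorable_if_bipartite:
  assumes "\<forall>u\<in>V. \<forall>v\<in>V. E u v \<longrightarrow> (u \<in> S \<longleftrightarrow> v \<notin> S)"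
  shows "three_colorable V E"
proof -
  have "is_3_coloring V E (\<lambda>x. if x \<in> S then 0 else 1)"
    using assms unfolding is_3_coloring_def by auto
  then show ?thesis
    unfolding three_colorable_iff_is_3_coloring by blast
qed

lemma not_connected_compl_if_complete_to:
  assumes "\<forall>u\<in>S. \<forall>v\<in>V - S. E u v" and "S \<subseteq> V" "a \<in> S" "x \<in> V - S"
  shows "\<not> connected_graph V (compl_adj V E)"
proof
  assume "connected_graph V (compl_adj V E)"
  then have "(compl_adj V E)\<^sup>*\<^sup>* a x"
    using assms unfolding connected_graph_def by blast
  then have "x \<in> S"
    by (induction rule: rtranclp_induct) (use assms in \<open>auto simp: compl_adj_def\<close>)
  with \<open>x \<in> V - S\<close> show False by blast
qed

lemma minimal_prime_graph_complement_adjacent: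
  assumes "minimal_prime_graph_complement V E"
    and "u \<in> V" "v \<in> V" "u \<noteq> v"
    and "\<nexists>z. E u z \<and> E v z"
    and "three_colorable V (add_edge E u v)"
  shows "E u v"
  using assms triangle_free_add_edge[of V E u v]
  unfolding minimal_prime_graph_complement_def by blast

lemma exists_private_neighbour:
  assumes mp: "minimal_prime_graph_complement V E"
    and XV: "X \<in> V" and nb: "nbhd V E X = {A, B}"
  shows "\<exists>v \<in> V - {X, A, B}. E v A \<and> \<not> E v B"
proof (rule ccontr)
  assume no_private: "\<not> ?thesis"
  have sg: "simple_graph V E" and tf: "triangle_free V E"
    and col: "three_colorable V E" and conn: "connected_graph V (compl_adj V E)"
    using mp unfolding minimal_prime_graph_complement_def by auto
  note G = simple_graphD[OF sg]
  have nbX: "E X y \<longleftrightarrow> y = A \<or> y = B" for y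
    using nb G(2) unfolding nbhd_def by blast
  then have "A \<in> V" "B \<in> V" "A \<noteq> X" "B \<noteq> X"
    using G by blast+
  have "\<not> E A B"
    using tf nbX XV \<open>A \<in> V\<close> \<open>B \<in> V\<close> unfolding triangle_free_def by blast
  have dominated: "\<forall>v. E v A \<longrightarrow> E v B"
    using no_private nbX \<open>\<not> E A B\<close> G by blast
  obtain c where "is_3_coloring V E c"
    using col unfolding three_colorable_iff_is_3_coloring ..
  from is_3_coloring_recolour_dominated[OF sg this \<open>B \<in> V\<close> dominated]
  have c: "is_3_coloring V E (c(A := c B))" .
  have adj_B: "E v B" if v: "v \<in> V - {A, B}" for v
  proof (rule ccontr)
    assume "\<not> E v B"
    then have "v \<noteq> X" "\<nexists>z. E X z \<and> E v z"
      using nbX dominated by auto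
    moreover have "three_colorable V (add_edge E X v)"
      using three_colorable_add_edge_recolour[OF sg c, of X v "c B"] \<open>v \<noteq> X\<close> nbX
      by (simp add: eq_commute)
    ultimately have "E X v"
      using minimal_prime_graph_complement_adjacent[OF mp XV] v by blast
    with v nbX show False by blast
  qed
  have independent: "\<not> E u w" if "u \<in> V - {A, B}" "w \<in> V - {A, B}" for u w
    using that adj_B tf \<open>B \<in> V\<close> G(3) unfolding triangle_free_def by blast
  have adj_A: "E A v" if v: "v \<in> V - {A, B}" for v
  proof -
    have "\<nexists>z. E A z \<and> E v z"
    proof
      assume "\<exists>z. E A z \<and> E v z"
      then obtain z where "E A z" "E v z" by blast
      then have "z \<in> V - {A, B}"
        using G(2,4) \<open>\<not> E A B\<close> by blast
      with v \<open>E v z\<close> independent show False by blast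
    qed
    moreover have "three_colorable V (add_edge E A v)"
    proof (rule three_colorable_if_bipartite[where S = "{A, B}"], intro ballI impI)
      fix u w assume "u \<in> V" "w \<in> V" "add_edge E A v u w"
      then show "u \<in> {A, B} \<longleftrightarrow> w \<notin> {A, B}"
        using independent[of u w] v G(3,4) \<open>\<not> E A B\<close> unfolding add_edge_iff by blast
    qed
    ultimately show ?thesis
      using minimal_prime_graph_complement_adjacent[OF mp \<open>A \<in> V\<close>] v by blast
  qed
  have "\<forall>u\<in>{A, B}. \<forall>v\<in>V - {A, B}. E u v"
    using adj_A adj_B G(3) by blast
  with conn XV \<open>A \<in> V\<close> \<open>B \<in> V\<close> \<open>A \<noteq> X\<close> \<open>B \<noteq> X\<close> show False
    using not_connected_compl_if_complete_to[of "{A, B}" V E A X] by blast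
qed

theorem lemma12:
  fixes V :: "'a set" and E :: "'a \<Rightarrow> 'a \<Rightarrow> bool" and X A B :: 'a
  assumes "minimal_prime_graph_complement V E"
    and "X \<in> V"
    and "nbhd V E X = {A, B}" and "A \<noteq> B"
  shows "{v \<in> V - {X, A, B}. E v A \<and> \<not> E v B} \<noteq> {}
       \<and> {v \<in> V - {X, A, B}. E v B \<and> \<not> E v A} \<noteq> {}"
proof -
  have "nbhd V E X = {B, A}" "{X, B, A} = {X, A, B}"
    using assms(3) by auto
  then have "\<exists>v \<in> V - {X, A, B}. E v B \<and> \<not> E v A"
    using exists_private_neighbour[OF assms(1,2)] by metis
  moreover have "\<exists>v \<in> V - {X, A, B}. E v A \<and> \<not> E v B"
    using exists_private_neighbour[OF assms(1-3)] .
  ultimately show ?thesis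
    by blast
qed

end
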